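(* For nonnegative integers $n,m$, \[\sum_{r=0}^n\sum_{s=0}^m\mathcal{K}_{n,m;r,s}(z/q,w/q;q)\,\Phi_{r,s}(u,v;c,d;z,w;q)=\Phi_{n,m}(uz,vw;cz,dw;z,w;q).\]
   Context: For $n\in\mathbb{Z}$, $(a;q)_n=(a;q)_\infty/(aq^n;q)_\infty$ ($1/(q;q)_n=0$ for $n<0$), $(a_1,\dots,a_k;q)_n=\prod_i(a_i;q)_n$. $\mathcal{K}_{n,m;r,s}(z,w;q):=\frac{z^rw^sq^{r^2-rs+s^2}}{(q;q)_{n-r}(q;q)_{m-s}}$. Let $Q=\{y=(y_1,y_2,y_3)\in\mathbb{Z}^3:y_1+y_2+y_3=0\}$ and $y_{ij}:=y_i-y_j$. For integers $n,m$ and $y\in Q$, \[\Phi_{n,m;y}(z,w;q):=\frac{(zwq;q)_{n+m}}{(q;q)_{n-y_1}(zq;q)_{n-y_2}(zwq;q)_{n-y_3}(q;q)_{m+y_3}(wq;q)_{m+y_2}(zwq;q)_{m+y_1}}.\] With $\rho=(1,2,3)$ and permutations $\sigma\in S_3$ written in one-line notation $\sigma=(\sigma_1,\sigma_2,\sigma_3)$ (so $\sigma-\rho\in Q$), define \[\Phi_{n,m}(u,v;c,d;z,w;q):=\sum_{\sigma\in S_3}\operatorname{sgn}(\sigma)(uz)^{\sigma_1-1}\Big(\frac{v}{d}\Big)^{\chi(\sigma_3=1)}\Big(\frac{c}{u}\Big)^{\chi(\sigma_1=3)}(dw)^{3-\sigma_3}\,\Phi_{n,m;\sigma-\rho}(z/q,w/q;q),\]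 where $\chi$ is the indicator function. *)

theory Defs
  imports Complex_Main "HOL-Combinatorics.Permutations"
begin

text \<open>q-Pochhammer symbol with integer index:
  (a;q)_n = (a;q)_inf / (a q^n;q)_inf, i.e. a finite product for n >= 0 and
  1 / prod_{k=1}^{-n} (1 - a q^{-k}) for n < 0.  For a = q and n < 0 the
  product contains the factor 1 - q/q = 0, so (q;q)_n = 1/0 = 0 and hence
  1/(q;q)_n = 0, as in the paper's convention.\<close>
definition qpoch :: "complex \<Rightarrow> complex \<Rightarrow> int \<Rightarrow> complex" where
  "qpoch a q n =
     (if 0 \<le> n then (\<Prod>k<nat n. (1 - a * q ^ k))
      else 1 / (\<Prod>k\<in>{1..nat (- n)}. (1 - a / q ^ k)))"

definition Kker :: "int \<Rightarrow> int \<Rightarrow> int \<Rightarrow> int \<Rightarrow> complex \<Rightarrow> complex \<Rightarrow> complex \<Rightarrow> complex" where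
  "Kker n m r s z w q =
     z powi r * w powi s * q powi (r^2 - r*s + s^2)
     / (qpoch q q (n - r) * qpoch q q (m - s))"

definition Phiy :: "int \<Rightarrow> int \<Rightarrow> int \<Rightarrow> int \<Rightarrow> int \<Rightarrow> complex \<Rightarrow> complex \<Rightarrow> complex \<Rightarrow> complex" where
  "Phiy n m y1 y2 y3 z w q =
     qpoch (z*w*q) q (n + m)
     / (qpoch q q (n - y1) * qpoch (z*q) q (n - y2) * qpoch (z*w*q) q (n - y3)
        * qpoch q q (m + y3) * qpoch (w*q) q (m + y2) * qpoch (z*w*q) q (m + y1))"

text \<open>Phi_{n,m}(u,v;c,d;z,w;q): sum over sigma in S_3, sigma a permutation of
  {1,2,3} with one-line notation (sigma 1, sigma 2, sigma 3), rho = (1,2,3).\<close>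
definition PhiS :: "int \<Rightarrow> int \<Rightarrow> complex \<Rightarrow> complex \<Rightarrow> complex \<Rightarrow> complex
                    \<Rightarrow> complex \<Rightarrow> complex \<Rightarrow> complex \<Rightarrow> complex" where
  "PhiS n m u v c d z w q =
     (\<Sum>\<sigma>\<in>{\<sigma>. \<sigma> permutes {1,2,3::nat}}.
        of_int (sign \<sigma>) * (u*z) ^ (\<sigma> 1 - 1)
        * (if \<sigma> 3 = 1 then v / d else 1)
        * (if \<sigma> 1 = 3 then c / u else 1)
        * (d*w) ^ (3 - \<sigma> 3)
        * Phiy n m (int (\<sigma> 1) - 1) (int (\<sigma> 2) - 2) (int (\<sigma> 3) - 3) (z/q) (w/q) q)"

end

theory Submission
  imports Defs
begin

text \<open>Expanding \<open>\<Phi>_{n,m}(u,v;c,d;z,w;q)\<close> as a sum over \<open>\<sigma> \<in> S_3\<close>, the coefficients do not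
  depend on \<open>n, m\<close>, and replacing \<open>(u,v,c,d)\<close> by \<open>(uz,vw,cz,dw)\<close> multiplies the coefficient
  of \<open>\<sigma>\<close> by \<open>z^(\<sigma>\<^sub>1-1) w^(3-\<sigma>\<^sub>3)\<close>. With \<open>i = \<sigma>\<^sub>1 - 1\<close> and \<open>j = 3 - \<sigma>\<^sub>3\<close> one has
  \<open>\<sigma> - \<rho> = (i, j-i, -j)\<close> and \<open>i\<^sup>2 - ij + j\<^sup>2 = i + j\<close>, so it suffices to show
  \<open>\<Sum>\<^sub>r\<^sub>,\<^sub>s K_{n,m;r,s}(z,w) \<Phi>_{r,s;y}(z,w) = z^i w^j q^(i\<^sup>2-ij+j\<^sup>2) \<Phi>_{n,m;y}(z,w)\<close>.
  Only \<open>r \<ge> i, s \<ge> j\<close> contribute, and shifting \<open>r, s\<close> by \<open>i, j\<close> turns both \<open>K\<close> and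
  \<open>\<Phi>_{\<cdot>,\<cdot>;y}\<close> into their \<open>y = 0\<close> versions with parameters \<open>z q^(2i-j)\<close> and \<open>w q^(2j-i)\<close>.
  For \<open>y = 0\<close>, a q-Chu--Vandermonde expansion of \<open>(abq;q)_{r+s}\<close> as a sum over \<open>k\<close> splits the
  summand into a factor depending on \<open>r\<close> and one depending on \<open>s\<close>; both sums are evaluated by a
  terminating q-binomial identity, and the remaining sum over \<open>k\<close> is a second expansion of
  \<open>\<Phi>_{n,m;0}\<close>.\<close>

section \<open>Finite q-Pochhammer symbols and q-binomial coefficients\<close>

definition qpochhammer :: "'a::comm_ring_1 \<Rightarrow> 'a \<Rightarrow> nat \<Rightarrow> 'a" where
  "qpochhammer x q k = (\<Prod>i<k. 1 - x * q ^ i)"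

lemma qpochhammer_0 [simp]: "qpochhammer x q 0 = 1"
  by (simp add: qpochhammer_def)

lemma qpochhammer_Suc: "qpochhammer x q (Suc k) = qpochhammer x q k * (1 - x * q ^ k)"
  by (simp add: qpochhammer_def)

lemma qpochhammer_Suc_left: "qpochhammer x q (Suc k) = (1 - x) * qpochhammer (x * q) q k"
  unfolding qpochhammer_def by (subst prod.lessThan_Suc_shift) (simp add: mult.assoc)

lemma qpochhammer_add: "qpochhammer x q (a + b) = qpochhammer x q a * qpochhammer (x * q ^ a) q b"
  by (induction b) (simp_all add: qpochhammer_Suc power_add mult.assoc)

lemma qpochhammer_Suc_combine:
  "q ^ Suc n * qpochhammer a q (Suc n) + (1 - q ^ Suc n) * qpochhammer (a * q) q n
     = qpochhammer (a * q) q (Suc n)"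
  "qpochhammer a q (Suc n) + (1 - q ^ Suc n) * a * qpochhammer (a * q) q n
     = qpochhammer (a * q) q (Suc n)"
  unfolding qpochhammer_Suc_left [of a] qpochhammer_Suc [of "a * q"]
  by (simp_all add: algebra_simps)

lemma qpochhammer_nonzero:
  fixes x q :: "'a::idom"
  assumes "\<And>i. i < k \<Longrightarrow> x * q ^ i \<noteq> 1"
  shows "qpochhammer x q k \<noteq> 0"
  using assms unfolding qpochhammer_def by (auto simp: prod_zero_iff)

lemma qpochhammer_shift_eq_divide:
  fixes x q :: "'a::field"
  assumes "k \<le> n" and "qpochhammer x q k \<noteq> 0"
  shows "qpochhammer (x * q ^ k) q (n - k) = qpochhammer x q n / qpochhammer x q k"
  using assms qpochhammer_add [of x q k "n - k"] by simp

definition qbinomial :: "'a::field \<Rightarrow> nat \<Rightarrow> nat \<Rightarrow> 'a" where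
  "qbinomial q n k =
     (if k \<le> n then qpochhammer q q n / (qpochhammer q q k * qpochhammer q q (n - k)) else 0)"

text \<open>The two q-Pascal rules come from writing \<open>1 - a b\<close> as \<open>a (1 - b) + (1 - a)\<close>
  and as \<open>(1 - b) + b (1 - a)\<close>.\<close>

lemma q_pascal_fraction:
  fixes A B C a b :: "'a::field"
  assumes "B \<noteq> 0" and "C \<noteq> 0" and "a \<noteq> 1" and "b \<noteq> 1"
  shows "A * (1 - a * b) / (B * (1 - a) * (C * (1 - b)))
      = a * (A / (B * (1 - a) * C)) + A / (B * (C * (1 - b)))"
    and "A * (1 - a * b) / (B * (1 - a) * (C * (1 - b)))
      = A / (B * (1 - a) * C) + b * (A / (B * (C * (1 - b))))"
proof -
  have factors: "B \<noteq> 0" "C \<noteq> 0" "1 - a \<noteq> 0" "1 - b \<noteq> 0"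
    using assms by simp_all
  have "a * (A / (B * (1 - a) * C)) + A / (B * (C * (1 - b)))
      = (a * A * (1 - b) + A * (1 - a)) / (B * (1 - a) * (C * (1 - b)))"
    using factors by (simp add: add_divide_distrib)
  then show "A * (1 - a * b) / (B * (1 - a) * (C * (1 - b)))
      = a * (A / (B * (1 - a) * C)) + A / (B * (C * (1 - b)))"
    by (simp add: algebra_simps)
  have "A / (B * (1 - a) * C) + b * (A / (B * (C * (1 - b))))
      = (A * (1 - b) + b * A * (1 - a)) / (B * (1 - a) * (C * (1 - b)))"
    using factors by (simp add: add_divide_distrib)
  then show "A * (1 - a * b) / (B * (1 - a) * (C * (1 - b)))
      = A / (B * (1 - a) * C) + b * (A / (B * (C * (1 - b))))"
    by (simp add: algebra_simps)
qed

locale q_not_root_of_unity =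
  fixes q :: "'a::field"
  assumes q_nonzero: "q \<noteq> 0" and q_power_ne_1: "\<And>k. k \<ge> 1 \<Longrightarrow> q ^ k \<noteq> 1"
begin

lemma q_power_Suc_ne_1 [simp]: "q * q ^ k \<noteq> 1"
  using q_power_ne_1 [of "Suc k"] by simp

lemma qpochhammer_q_nonzero [simp]: "qpochhammer q q k \<noteq> 0"
  by (rule qpochhammer_nonzero) simp

lemma qbinomial_0_right [simp]: "qbinomial q n 0 = 1"
  by (simp add: qbinomial_def)

lemma qbinomial_0_left [simp]: "qbinomial q 0 k = (if k = 0 then 1 else 0)"
  by (simp add: qbinomial_def)

lemma qbinomial_eq_0 [simp]: "n < k \<Longrightarrow> qbinomial q n k = 0"
  by (simp add: qbinomial_def)

lemma qbinomial_Suc_Suc: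
  "qbinomial q (Suc m) (Suc k) = q ^ Suc k * qbinomial q m (Suc k) + qbinomial q m k"
  "qbinomial q (Suc m) (Suc k) = qbinomial q m (Suc k) + q ^ (m - k) * qbinomial q m k"
proof -
  consider "Suc k \<le> m" | "k = m" | "m < k"
    by linarith
  then have "qbinomial q (Suc m) (Suc k) = q ^ Suc k * qbinomial q m (Suc k) + qbinomial q m k
    \<and> qbinomial q (Suc m) (Suc k) = qbinomial q m (Suc k) + q ^ (m - k) * qbinomial q m k"
  proof cases
    case 1
    then obtain t where t: "m - k = Suc t" "m - Suc k = t"
      by (metis Suc_diff_Suc Suc_le_lessD diff_Suc_Suc)
    define A B C a b where "A = qpochhammer q q m" and "B = qpochhammer q q k"
      and "C = qpochhammer q q t" and "a = q ^ Suc k" and "b = q ^ Suc t"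
    have "k + Suc t = m"
      using 1 t by arith
    then have ab: "a * b = q ^ Suc m"
      unfolding a_def b_def by (metis add_Suc power_add)
    have "qbinomial q (Suc m) (Suc k) = A * (1 - a * b) / (B * (1 - a) * (C * (1 - b)))"
      unfolding ab using 1 t by (simp add: A_def B_def C_def a_def b_def qbinomial_def qpochhammer_Suc)
    moreover have "qbinomial q m (Suc k) = A / (B * (1 - a) * C)"
      using 1 t by (simp add: A_def B_def C_def a_def qbinomial_def qpochhammer_Suc)
    moreover have "qbinomial q m k = A / (B * (C * (1 - b)))"
      using 1 t by (simp add: A_def B_def C_def b_def qbinomial_def qpochhammer_Suc)
    moreover have "B \<noteq> 0" "C \<noteq> 0" "a \<noteq> 1" "b \<noteq> 1"
      by (simp_all add: B_def C_def a_def b_def)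
    ultimately show ?thesis
      using q_pascal_fraction [of B C a b A] by (simp add: a_def b_def t(1))
  qed (auto simp: qbinomial_def)
  then show "qbinomial q (Suc m) (Suc k) = q ^ Suc k * qbinomial q m (Suc k) + qbinomial q m k"
    and "qbinomial q (Suc m) (Suc k) = qbinomial q m (Suc k) + q ^ (m - k) * qbinomial q m k"
    by blast+
qed

lemma qbinomial_Suc:
  shows "qbinomial q (Suc m) k
      = q ^ k * qbinomial q m k + (if k = 0 then 0 else qbinomial q m (k - 1))"
    and "qbinomial q (Suc m) k
      = qbinomial q m k + (if k = 0 then 0 else q ^ (Suc m - k) * qbinomial q m (k - 1))"
  by (cases k; simp add: qbinomial_Suc_Suc(1); fail) (cases k; simp add: qbinomial_Suc_Suc(2))

lemma qbinomial_Suc_Suc_mult_qpochhammer: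
  "qbinomial q (Suc n) (Suc k) * qpochhammer q q (Suc k)
     = (1 - q ^ Suc n) * qbinomial q n k * qpochhammer q q k"
proof (cases "k \<le> n")
  case True
  then have "Suc n - Suc k = n - k"
    by simp
  then show ?thesis
    using True by (simp add: qbinomial_def qpochhammer_Suc field_simps)
qed simp

lemma sum_qbinomial_mult_qpochhammer_Suc:
  "(\<Sum>k\<le>Suc n. f k * qbinomial q (Suc n) k * qpochhammer q q k)
     = f 0 + (1 - q ^ Suc n) * (\<Sum>k\<le>n. f (Suc k) * qbinomial q n k * qpochhammer q q k)"
proof -
  have "f (Suc k) * qbinomial q (Suc n) (Suc k) * qpochhammer q q (Suc k)
      = (1 - q ^ Suc n) * (f (Suc k) * qbinomial q n k * qpochhammer q q k)" for k
    by (simp add: mult.assoc qbinomial_Suc_Suc_mult_qpochhammer)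
  then show ?thesis
    by (simp only: sum.atMost_Suc_shift) (simp add: sum_distrib_left)
qed

end

section \<open>Terminating q-series identities\<close>

lemma power_shift_square:
  fixes x q :: "'a::comm_semiring_1"
  assumes "k \<le> m"
  shows "x ^ Suc k * q ^ (Suc k * Suc k) * q ^ (m - k) = x * q ^ Suc m * ((x * q) ^ k * q ^ (k * k))"
proof -
  have "Suc k * Suc k + (m - k) = Suc m + k + k * k"
    using assms by (simp add: algebra_simps)
  then have "q ^ (Suc k * Suc k) * q ^ (m - k) = q ^ Suc m * q ^ k * q ^ (k * k)"
    by (metis power_add)
  then have "x * x ^ k * (q ^ (Suc k * Suc k) * q ^ (m - k))
      = x * q ^ Suc m * ((x * q) ^ k * q ^ (k * k))"
    by (simp only: power_mult_distrib mult_ac)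
  then show ?thesis
    by (simp only: power_Suc [of x] mult_ac)
qed

context q_not_root_of_unity
begin

lemma qbinomial_sum_eq_1:
  "(\<Sum>j\<le>N. qbinomial q N j * x ^ j * q ^ (j * j) * qpochhammer (x * q ^ Suc j) q (N - j)) = 1"
proof (induction N arbitrary: x)
  case 0
  then show ?case by simp
next
  case (Suc N)
  define g where
    "g x j = qbinomial q N j * x ^ j * q ^ (j * j) * qpochhammer (x * q ^ Suc j) q (N - j)" for x j
  define h where
    "h j = qbinomial q N j * x ^ j * q ^ (j * j) * qpochhammer (x * q ^ Suc j) q (Suc N - j)" for j
  define b where "b j = q ^ (N - j) * qbinomial q N j * x ^ Suc j * q ^ (Suc j * Suc j)
      * qpochhammer (x * q ^ Suc (Suc j)) q (N - j)" for j
  have "(\<Sum>j\<le>Suc N. qbinomial q (Suc N) j * x ^ j * q ^ (j * j)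
        * qpochhammer (x * q ^ Suc j) q (Suc N - j))
      = h 0 + (\<Sum>j\<le>N. h (Suc j) + b j)"
    by (subst sum.atMost_Suc_shift) (simp add: h_def b_def qbinomial_Suc_Suc(2) algebra_simps)
  also have "\<dots> = (\<Sum>j\<le>Suc N. h j) + (\<Sum>j\<le>N. b j)"
    by (simp only: sum.distrib sum.atMost_Suc_shift [of h] add.assoc)
  also have "(\<Sum>j\<le>Suc N. h j) = (1 - x * q ^ Suc N) * (\<Sum>j\<le>N. g x j)"
  proof -
    have "h j = (1 - x * q ^ Suc N) * g x j" if "j \<le> N" for j
    proof -
      have "x * q ^ Suc j * q ^ (N - j) = x * q ^ Suc N"
        using that by (simp add: mult.assoc power_add [symmetric])
      then show ?thesis
        using that by (simp add: h_def g_def Suc_diff_le qpochhammer_Suc)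
    qed
    moreover have "h (Suc N) = 0"
      by (simp add: h_def)
    ultimately show ?thesis
      by (simp add: sum_distrib_left)
  qed
  also have "(\<Sum>j\<le>N. b j) = x * q ^ Suc N * (\<Sum>j\<le>N. g (x * q) j)"
  proof -
    have "b j = x * q ^ Suc N * g (x * q) j" if "j \<le> N" for j
    proof -
      have "b j = (x ^ Suc j * q ^ (Suc j * Suc j) * q ^ (N - j))
          * (qbinomial q N j * qpochhammer (x * q ^ Suc (Suc j)) q (N - j))"
        by (simp only: b_def mult_ac)
      also have "\<dots> = x * q ^ Suc N * ((x * q) ^ j * q ^ (j * j))
          * (qbinomial q N j * qpochhammer (x * q ^ Suc (Suc j)) q (N - j))"
        by (simp only: power_shift_square [OF that])
      also have "\<dots> = x * q ^ Suc N * g (x * q) j"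
        by (simp only: g_def power_Suc mult_ac)
      finally show ?thesis .
    qed
    then show ?thesis
      by (simp add: sum_distrib_left)
  qed
  finally show ?case
    using Suc.IH [of x] Suc.IH [of "x * q"] unfolding g_def by (simp add: algebra_simps)
qed

lemma qbinomial_Suc_mult_power_diff:
  assumes "k \<le> n"
  shows "q ^ ((n - k) * (Suc m - k)) * qbinomial q (Suc m) k
    = q ^ n * (q ^ ((n - k) * (m - k)) * qbinomial q m k)
      + (if k = 0 then 0 else q ^ ((n - k) * (Suc m - k)) * qbinomial q m (k - 1))"
proof -
  have "k \<le> m \<Longrightarrow> q ^ ((n - k) * (Suc m - k)) * q ^ k = q ^ n * q ^ ((n - k) * (m - k))"
    using assms by (simp add: Suc_diff_le power_add [symmetric] algebra_simps)
  then show ?thesis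
    unfolding qbinomial_Suc(1)
    by (cases "k \<le> m") (simp_all add: distrib_left mult.assoc [symmetric])
qed

lemma qpochhammer_shift_expansion_diff:
  "(\<Sum>k\<le>n. q ^ ((n - k) * (m - k)) * qbinomial q n k * qbinomial q m k * qpochhammer q q k
      * qpochhammer (c * q ^ k) q (n - k)) = qpochhammer (c * q ^ m) q n"
proof (induction m arbitrary: n c)
  case 0
  then show ?case by (simp add: sum.atMost_shift)
next
  case (Suc m)
  define R where
    "R k = (if k = 0 then 0 else q ^ ((n - k) * (Suc m - k)) * qbinomial q m (k - 1))" for k
  have "(\<Sum>k\<le>n. q ^ ((n - k) * (Suc m - k)) * qbinomial q n k * qbinomial q (Suc m) k
        * qpochhammer q q k * qpochhammer (c * q ^ k) q (n - k))
      = (\<Sum>k\<le>n. q ^ n * (q ^ ((n - k) * (m - k)) * qbinomial q n k * qbinomial q m k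
          * qpochhammer q q k * qpochhammer (c * q ^ k) q (n - k))
        + R k * qpochhammer (c * q ^ k) q (n - k) * qbinomial q n k * qpochhammer q q k)"
  proof (rule sum.cong [OF refl])
    fix k
    assume "k \<in> {..n}"
    then show "q ^ ((n - k) * (Suc m - k)) * qbinomial q n k * qbinomial q (Suc m) k
        * qpochhammer q q k * qpochhammer (c * q ^ k) q (n - k)
      = q ^ n * (q ^ ((n - k) * (m - k)) * qbinomial q n k * qbinomial q m k
          * qpochhammer q q k * qpochhammer (c * q ^ k) q (n - k))
        + R k * qpochhammer (c * q ^ k) q (n - k) * qbinomial q n k * qpochhammer q q k"
      using qbinomial_Suc_mult_power_diff [of k n m] unfolding R_def
      by (simp add: algebra_simps)
  qed
  also have "\<dots> = q ^ n * qpochhammer (c * q ^ m) q n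
      + (\<Sum>k\<le>n. R k * qpochhammer (c * q ^ k) q (n - k) * qbinomial q n k * qpochhammer q q k)"
    by (simp add: sum.distrib Suc.IH flip: sum_distrib_left)
  also have "\<dots> = qpochhammer (c * q ^ Suc m) q n"
  proof (cases n)
    case (Suc n')
    have R_0: "R 0 = 0" and R_Suc: "R (Suc k) = q ^ ((n' - k) * (m - k)) * qbinomial q m k" for k
      by (simp_all add: R_def Suc)
    have tail: "(\<Sum>k\<le>n. R k * qpochhammer (c * q ^ k) q (n - k) * qbinomial q n k
        * qpochhammer q q k) = (1 - q ^ n) * qpochhammer (c * q * q ^ m) q n'"
      unfolding Suc sum_qbinomial_mult_qpochhammer_Suc
      using Suc.IH [of n' "c * q"] by (simp add: R_0 R_Suc ac_simps)
    show ?thesis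
      unfolding tail using qpochhammer_Suc_combine(1) [where a = "c * q ^ m" and q = q and n = n']
      by (simp add: Suc ac_simps)
  qed (simp add: R_def)
  finally show ?case .
qed

lemma qpochhammer_shift_expansion_square:
  "(\<Sum>k\<le>n. x ^ k * q ^ (k * k) * qbinomial q n k * qbinomial q m k * qpochhammer q q k
      * qpochhammer (x * q ^ Suc k) q (n - k)) = qpochhammer (x * q ^ Suc m) q n"
proof (induction m arbitrary: n x)
  case 0
  then show ?case by (simp add: sum.atMost_shift)
next
  case (Suc m)
  define R where
    "R k = (if k = 0 then 0 else x ^ k * q ^ (k * k) * q ^ (Suc m - k) * qbinomial q m (k - 1))"
    for k
  have "(\<Sum>k\<le>n. x ^ k * q ^ (k * k) * qbinomial q n k * qbinomial q (Suc m) k * qpochhammer q q k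
        * qpochhammer (x * q ^ Suc k) q (n - k))
      = (\<Sum>k\<le>n. x ^ k * q ^ (k * k) * qbinomial q n k * qbinomial q m k * qpochhammer q q k
          * qpochhammer (x * q ^ Suc k) q (n - k)
        + R k * qpochhammer (x * q ^ Suc k) q (n - k) * qbinomial q n k * qpochhammer q q k)"
    by (rule sum.cong [OF refl]) (simp add: qbinomial_Suc(2) R_def algebra_simps)
  also have "\<dots> = qpochhammer (x * q ^ Suc m) q n
      + (\<Sum>k\<le>n. R k * qpochhammer (x * q ^ Suc k) q (n - k) * qbinomial q n k * qpochhammer q q k)"
    using Suc.IH by (simp add: sum.distrib)
  also have "\<dots> = qpochhammer (x * q ^ Suc (Suc m)) q n"
  proof (cases n)
    case (Suc n')
    have R_0: "R 0 = 0"
      by (simp add: R_def)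
    have R_Suc: "R (Suc k) = x * q ^ Suc m * ((x * q) ^ k * q ^ (k * k) * qbinomial q m k)" for k
    proof (cases "k \<le> m")
      case True
      have "R (Suc k) = x ^ Suc k * q ^ (Suc k * Suc k) * q ^ (m - k) * qbinomial q m k"
        by (simp add: R_def)
      also have "\<dots> = x * q ^ Suc m * ((x * q) ^ k * q ^ (k * k)) * qbinomial q m k"
        by (simp only: power_shift_square [OF True])
      finally show ?thesis
        by (simp only: mult.assoc)
    qed (simp add: R_def)
    have "(\<Sum>k\<le>n'. R (Suc k) * qpochhammer (x * q ^ Suc (Suc k)) q (n' - k)
        * qbinomial q n' k * qpochhammer q q k) = x * q ^ Suc m * qpochhammer (x * q * q ^ Suc m) q n'"
      unfolding Suc.IH [where n = n' and x = "x * q", symmetric]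
      by (simp add: R_Suc sum_distrib_left ac_simps)
    then have tail: "(\<Sum>k\<le>n. R k * qpochhammer (x * q ^ Suc k) q (n - k) * qbinomial q n k
        * qpochhammer q q k) = (1 - q ^ n) * (x * q ^ Suc m) * qpochhammer (x * q * q ^ Suc m) q n'"
      unfolding Suc sum_qbinomial_mult_qpochhammer_Suc by (simp add: R_0 mult.assoc)
    show ?thesis
      unfolding tail using qpochhammer_Suc_combine(2) [where a = "x * q ^ Suc m" and q = q and n = n']
      by (simp add: Suc ac_simps)
  qed (simp add: R_def)
  finally show ?case .
qed

lemma reciprocal_qpochhammer_expansion:
  assumes x: "\<And>t. x * q * q ^ t \<noteq> 1"
  shows "(\<Sum>j\<le>N. x ^ j * q ^ (j * j)
            / (qpochhammer q q (N - j) * qpochhammer q q j * qpochhammer (x * q) q j))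
       = 1 / (qpochhammer q q N * qpochhammer (x * q) q N)"
proof -
  have nz: "qpochhammer (x * q) q k \<noteq> 0" for k
    by (rule qpochhammer_nonzero) (metis x mult.assoc)
  have "qbinomial q N j * x ^ j * q ^ (j * j) * qpochhammer (x * q ^ Suc j) q (N - j)
      = qpochhammer q q N * qpochhammer (x * q) q N * (x ^ j * q ^ (j * j)
          / (qpochhammer q q (N - j) * qpochhammer q q j * qpochhammer (x * q) q j))"
    if "j \<le> N" for j
  proof -
    have "qpochhammer (x * q ^ Suc j) q (N - j) = qpochhammer (x * q) q N / qpochhammer (x * q) q j"
      using qpochhammer_shift_eq_divide [OF that nz] by (simp add: ac_simps)
    then show ?thesis
      using that nz [of j] by (simp add: qbinomial_def field_simps)
  qed
  then have "qpochhammer q q N * qpochhammer (x * q) q N * (\<Sum>j\<le>N. x ^ j * q ^ (j * j)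
      / (qpochhammer q q (N - j) * qpochhammer q q j * qpochhammer (x * q) q j)) = 1"
    using qbinomial_sum_eq_1 [of N x] by (simp add: sum_distrib_left)
  then show ?thesis
    using nz [of N] by (simp add: field_simps)
qed

lemma qpochhammer_add_expansion_diff:
  assumes c: "\<And>t. c * q ^ t \<noteq> 1"
  shows "qpochhammer c q (r + s)
         / (qpochhammer q q r * qpochhammer q q s * qpochhammer c q r * qpochhammer c q s)
       = (\<Sum>k\<le>r. if k \<le> s then q ^ ((r - k) * (s - k))
            / (qpochhammer q q (r - k) * qpochhammer q q (s - k) * qpochhammer q q k * qpochhammer c q k)
          else 0)"
proof -
  have nz: "qpochhammer c q k \<noteq> 0" for k
    by (rule qpochhammer_nonzero) (rule c)
  have "q ^ ((r - k) * (s - k)) * qbinomial q r k * qbinomial q s k * qpochhammer q q k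
        * qpochhammer (c * q ^ k) q (r - k)
      = qpochhammer q q r * qpochhammer q q s * qpochhammer c q r * (if k \<le> s then q ^ ((r - k) * (s - k))
          / (qpochhammer q q (r - k) * qpochhammer q q (s - k) * qpochhammer q q k * qpochhammer c q k)
        else 0)"
    if "k \<le> r" for k
    using that nz [of k] qpochhammer_shift_eq_divide [OF that nz]
    by (simp add: qbinomial_def field_simps)
  then have "qpochhammer q q r * qpochhammer q q s * qpochhammer c q r * (\<Sum>k\<le>r. if k \<le> s
      then q ^ ((r - k) * (s - k))
        / (qpochhammer q q (r - k) * qpochhammer q q (s - k) * qpochhammer q q k * qpochhammer c q k)
      else 0) = qpochhammer (c * q ^ s) q r"
    using qpochhammer_shift_expansion_diff [of r s c] by (simp add: sum_distrib_left)
  moreover have "qpochhammer c q (r + s) = qpochhammer c q s * qpochhammer (c * q ^ s) q r"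
    using qpochhammer_add [of c q s r] by (simp add: add.commute)
  ultimately show ?thesis
    using nz [of r] nz [of s] by (simp add: field_simps)
qed

lemma qpochhammer_add_expansion_square:
  assumes x: "\<And>t. x * q * q ^ t \<noteq> 1"
  shows "qpochhammer (x * q) q (n + m)
         / (qpochhammer q q n * qpochhammer q q m * qpochhammer (x * q) q n * qpochhammer (x * q) q m)
       = (\<Sum>k\<le>n. if k \<le> m then x ^ k * q ^ (k * k)
            / (qpochhammer q q k * qpochhammer (x * q) q k * qpochhammer q q (n - k) * qpochhammer q q (m - k))
          else 0)"
proof -
  have nz: "qpochhammer (x * q) q k \<noteq> 0" for k
    by (rule qpochhammer_nonzero) (metis x mult.assoc)
  have "x ^ k * q ^ (k * k) * qbinomial q n k * qbinomial q m k * qpochhammer q q k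
        * qpochhammer (x * q ^ Suc k) q (n - k)
      = qpochhammer q q n * qpochhammer q q m * qpochhammer (x * q) q n * (if k \<le> m then x ^ k * q ^ (k * k)
          / (qpochhammer q q k * qpochhammer (x * q) q k * qpochhammer q q (n - k) * qpochhammer q q (m - k))
        else 0)"
    if "k \<le> n" for k
  proof -
    have "qpochhammer (x * q ^ Suc k) q (n - k) = qpochhammer (x * q) q n / qpochhammer (x * q) q k"
      using qpochhammer_shift_eq_divide [OF that nz] by (simp add: ac_simps)
    then show ?thesis
      using that nz [of k] by (simp add: qbinomial_def field_simps)
  qed
  then have "qpochhammer q q n * qpochhammer q q m * qpochhammer (x * q) q n * (\<Sum>k\<le>n. if k \<le> m
      then x ^ k * q ^ (k * k)
        / (qpochhammer q q k * qpochhammer (x * q) q k * qpochhammer q q (n - k) * qpochhammer q q (m - k))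
      else 0) = qpochhammer (x * q ^ Suc m) q n"
    using qpochhammer_shift_expansion_square [of x n m] by (simp add: sum_distrib_left)
  moreover have "qpochhammer (x * q) q (n + m) = qpochhammer (x * q) q m * qpochhammer (x * q ^ Suc m) q n"
    using qpochhammer_add [of "x * q" q m n] by (simp add: add.commute ac_simps)
  ultimately show ?thesis
    using nz [of n] nz [of m] by (simp add: field_simps)
qed

end

section \<open>The kernel identity for \<open>y = 0\<close>\<close>

lemma sum_atMost_add_vanishing:
  fixes f :: "nat \<Rightarrow> 'a::comm_monoid_add"
  assumes "\<And>r. r < k \<Longrightarrow> f r = 0"
  shows "(\<Sum>r\<le>k + n. f r) = (\<Sum>j\<le>n. f (k + j))"
proof -
  have "(\<Sum>r\<le>k + n. f r) = sum f {k..k + n}"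
    using assms by (intro sum.mono_neutral_right) auto
  also have "\<dots> = (\<Sum>j\<le>n. f (k + j))"
    using sum.shift_bounds_cl_nat_ivl [of f 0 k n] by (simp add: atLeast0AtMost add.commute)
  finally show ?thesis .
qed

lemma mult_le_sq_add_sq: "(x::nat) * y \<le> x * x + y * y"
proof (cases "x \<le> y")
  case True
  then have "x * y \<le> y * y" by (rule mult_le_mono1)
  then show ?thesis by linarith
next
  case False
  then have "x * y \<le> x * x" by (simp add: mult_le_mono2)
  then show ?thesis by linarith
qed

lemma quadratic_exponent_split:
  fixes k r s :: nat
  assumes "k \<le> r" "k \<le> s"
  shows "(r * r + s * s - r * s) + (r - k) * (s - k) = (r * r - k * r) + (s * s - k * s) + k * k"
proof -
  have "k * r \<le> r * r" "k * s \<le> s * s"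
    using assms by (simp_all add: mult_le_mono1)
  then have "int ((r * r + s * s - r * s) + (r - k) * (s - k)) = int ((r * r - k * r) + (s * s - k * s) + k * k)"
    using assms mult_le_sq_add_sq [of r s]
    by (simp only: of_nat_add of_nat_mult of_nat_diff) (simp add: algebra_simps)
  then show ?thesis
    by (simp only: of_nat_eq_iff)
qed

text \<open>\<open>kernel_nat n m r s a b q\<close> and \<open>Phi0 n m a b q\<close> are \<open>K_{n,m;r,s}(a,b;q)\<close> and
  \<open>\<Phi>_{n,m;0}(a,b;q)\<close> for natural indices; \<open>kernel_nat\<close> is only used for \<open>r \<le> n\<close>, \<open>s \<le> m\<close>,
  since \<open>n - r\<close> truncates.\<close>

definition kernel_nat :: "nat \<Rightarrow> nat \<Rightarrow> nat \<Rightarrow> nat \<Rightarrow> 'a::field \<Rightarrow> 'a \<Rightarrow> 'a \<Rightarrow> 'a" where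
  "kernel_nat n m r s a b q =
     a ^ r * b ^ s * q ^ (r * r + s * s - r * s) / (qpochhammer q q (n - r) * qpochhammer q q (m - s))"

definition Phi0 :: "nat \<Rightarrow> nat \<Rightarrow> 'a::field \<Rightarrow> 'a \<Rightarrow> 'a \<Rightarrow> 'a" where
  "Phi0 n m a b q = qpochhammer (a * b * q) q (n + m)
     / (qpochhammer q q n * qpochhammer (a * q) q n * qpochhammer (a * b * q) q n
        * qpochhammer q q m * qpochhammer (b * q) q m * qpochhammer (a * b * q) q m)"

context q_not_root_of_unity
begin

definition kernel_factor :: "'a \<Rightarrow> nat \<Rightarrow> nat \<Rightarrow> nat \<Rightarrow> 'a" where
  "kernel_factor a n k r = (if k \<le> r then a ^ r * q ^ (r * r - k * r)
     / (qpochhammer q q (n - r) * qpochhammer q q (r - k) * qpochhammer (a * q) q r) else 0)"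

lemma sum_kernel_factor:
  assumes a: "\<And>t. a * q * q ^ t \<noteq> 1" and "k \<le> n"
  shows "(\<Sum>r\<le>n. kernel_factor a n k r) = a ^ k / (qpochhammer q q (n - k) * qpochhammer (a * q) q n)"
proof -
  define x where "x = a * q ^ k"
  have x: "x * q * q ^ t \<noteq> 1" for t
    using a [of "k + t"] by (simp add: x_def power_add ac_simps)
  have split: "qpochhammer (a * q) q (k + j) = qpochhammer (a * q) q k * qpochhammer (x * q) q j" for j
    by (simp only: qpochhammer_add x_def mult_ac)
  have "(\<Sum>r\<le>n. kernel_factor a n k r)
      = (\<Sum>j\<le>n - k. a ^ (k + j) * q ^ ((k + j) * (k + j) - k * (k + j))
          / (qpochhammer q q (n - (k + j)) * qpochhammer q q (k + j - k) * qpochhammer (a * q) q (k + j)))"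
    using sum_atMost_add_vanishing [of k "kernel_factor a n k" "n - k"] \<open>k \<le> n\<close>
    by (simp add: kernel_factor_def)
  also have "\<dots> = (\<Sum>j\<le>n - k. a ^ k / qpochhammer (a * q) q k
      * (x ^ j * q ^ (j * j) / (qpochhammer q q (n - k - j) * qpochhammer q q j * qpochhammer (x * q) q j)))"
  proof (rule sum.cong [OF refl])
    fix j
    have "(k + j) * (k + j) - k * (k + j) = k * j + j * j"
      by (simp add: algebra_simps)
    moreover have "x ^ j = a ^ j * q ^ (k * j)"
      by (simp add: x_def power_mult_distrib power_mult)
    ultimately have num: "a ^ (k + j) * q ^ ((k + j) * (k + j) - k * (k + j)) = a ^ k * (x ^ j * q ^ (j * j))"
      by (simp only: power_add mult_ac)
    show "a ^ (k + j) * q ^ ((k + j) * (k + j) - k * (k + j))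
        / (qpochhammer q q (n - (k + j)) * qpochhammer q q (k + j - k) * qpochhammer (a * q) q (k + j))
      = a ^ k / qpochhammer (a * q) q k
        * (x ^ j * q ^ (j * j) / (qpochhammer q q (n - k - j) * qpochhammer q q j * qpochhammer (x * q) q j))"
      unfolding num split diff_diff_add add_diff_cancel_left'
      by (simp only: divide_inverse inverse_mult_distrib mult_ac)
  qed
  also have "\<dots> = a ^ k / qpochhammer (a * q) q k * (\<Sum>j\<le>n - k. x ^ j * q ^ (j * j)
      / (qpochhammer q q (n - k - j) * qpochhammer q q j * qpochhammer (x * q) q j))"
    by (rule sum_distrib_left [symmetric])
  also have "\<dots> = a ^ k / qpochhammer (a * q) q k * (1 / (qpochhammer q q (n - k) * qpochhammer (x * q) q (n - k)))"
    by (simp only: reciprocal_qpochhammer_expansion [OF x])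
  also have "\<dots> = a ^ k / (qpochhammer q q (n - k) * qpochhammer (a * q) q n)"
    using split [of "n - k"] \<open>k \<le> n\<close> by (simp add: divide_inverse inverse_mult_distrib ac_simps)
  finally show ?thesis .
qed

lemma kernel_factor_mult_kernel_factor:
  assumes a: "\<And>t. a * q * q ^ t \<noteq> 1" and b: "\<And>t. b * q * q ^ t \<noteq> 1"
    and c: "\<And>t. a * b * q * q ^ t \<noteq> 1" and "k \<le> r" and "k \<le> s"
  shows "kernel_factor a n k r * kernel_factor b m k s
      * (q ^ (k * k) / (qpochhammer q q k * qpochhammer (a * b * q) q k))
    = a ^ r * b ^ s * q ^ (r * r + s * s - r * s) / (qpochhammer q q (n - r) * qpochhammer q q (m - s)
        * qpochhammer (a * q) q r * qpochhammer (b * q) q s)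
      * (q ^ ((r - k) * (s - k)) / (qpochhammer q q (r - k) * qpochhammer q q (s - k)
        * qpochhammer q q k * qpochhammer (a * b * q) q k))"
proof -
  have "qpochhammer (a * q) q r \<noteq> 0" "qpochhammer (b * q) q s \<noteq> 0"
    "qpochhammer (a * b * q) q k \<noteq> 0"
    by (rule qpochhammer_nonzero, metis a b c mult.assoc)+
  moreover have "q ^ (r * r + s * s - r * s) * q ^ ((r - k) * (s - k))
      = q ^ (r * r - k * r) * q ^ (s * s - k * s) * q ^ (k * k)"
    using assms by (simp add: quadratic_exponent_split flip: power_add)
  then have "q ^ ((r - k) * (s - k))
      = q ^ (r * r - k * r) * q ^ (s * s - k * s) * q ^ (k * k) / q ^ (r * r + s * s - r * s)"
    using q_nonzero by (simp add: field_simps)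
  ultimately show ?thesis
    using assms q_nonzero by (simp add: kernel_factor_def field_simps)
qed

lemma kernel_nat_mult_Phi0_expansion:
  assumes a: "\<And>t. a * q * q ^ t \<noteq> 1" and b: "\<And>t. b * q * q ^ t \<noteq> 1"
    and c: "\<And>t. a * b * q * q ^ t \<noteq> 1" and "r \<le> n"
  shows "kernel_nat n m r s a b q * Phi0 r s a b q
    = (\<Sum>k\<le>n. kernel_factor a n k r * kernel_factor b m k s
        * (q ^ (k * k) / (qpochhammer q q k * qpochhammer (a * b * q) q k)))"
proof -
  define pref where "pref = a ^ r * b ^ s * q ^ (r * r + s * s - r * s) / (qpochhammer q q (n - r)
    * qpochhammer q q (m - s) * qpochhammer (a * q) q r * qpochhammer (b * q) q s)"
  have "kernel_nat n m r s a b q * Phi0 r s a b q = pref * (qpochhammer (a * b * q) q (r + s)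
      / (qpochhammer q q r * qpochhammer q q s * qpochhammer (a * b * q) q r * qpochhammer (a * b * q) q s))"
    by (simp add: kernel_nat_def Phi0_def pref_def divide_inverse inverse_mult_distrib ac_simps)
  also have "\<dots> = pref * (\<Sum>k\<le>r. if k \<le> s then q ^ ((r - k) * (s - k))
      / (qpochhammer q q (r - k) * qpochhammer q q (s - k) * qpochhammer q q k * qpochhammer (a * b * q) q k)
      else 0)"
    by (simp only: qpochhammer_add_expansion_diff [OF c])
  also have "\<dots> = (\<Sum>k\<le>n. if k \<le> r \<and> k \<le> s then pref * (q ^ ((r - k) * (s - k))
      / (qpochhammer q q (r - k) * qpochhammer q q (s - k) * qpochhammer q q k * qpochhammer (a * b * q) q k))
      else 0)"
  proof -
    have "{..n} \<inter> ({k. k \<le> r} \<inter> {k. k \<le> s}) = {..r} \<inter> {k. k \<le> s}"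
      using \<open>r \<le> n\<close> by auto
    then show ?thesis
      by (simp add: sum_distrib_left sum.If_cases Collect_conj_eq)
  qed
  also have "\<dots> = (\<Sum>k\<le>n. kernel_factor a n k r * kernel_factor b m k s
      * (q ^ (k * k) / (qpochhammer q q k * qpochhammer (a * b * q) q k)))"
  proof (rule sum.cong [OF refl])
    fix k
    show "(if k \<le> r \<and> k \<le> s then pref * (q ^ ((r - k) * (s - k)) / (qpochhammer q q (r - k)
        * qpochhammer q q (s - k) * qpochhammer q q k * qpochhammer (a * b * q) q k)) else 0)
      = kernel_factor a n k r * kernel_factor b m k s
        * (q ^ (k * k) / (qpochhammer q q k * qpochhammer (a * b * q) q k))"
    proof (cases "k \<le> r \<and> k \<le> s")
      case True
      then show ?thesis
        unfolding pref_def if_P [OF True] by (simp only: kernel_factor_mult_kernel_factor [OF a b c])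
    qed (auto simp: kernel_factor_def)
  qed
  finally show ?thesis .
qed

lemma sum_kernel_factor_mult_sum_kernel_factor:
  assumes a: "\<And>t. a * q * q ^ t \<noteq> 1" and b: "\<And>t. b * q * q ^ t \<noteq> 1" and "k \<le> n"
  shows "(\<Sum>r\<le>n. kernel_factor a n k r) * (\<Sum>s\<le>m. kernel_factor b m k s)
    = (if k \<le> m then a ^ k / (qpochhammer q q (n - k) * qpochhammer (a * q) q n)
        * (b ^ k / (qpochhammer q q (m - k) * qpochhammer (b * q) q m)) else 0)"
proof (cases "k \<le> m")
  case False
  then have "(\<Sum>s\<le>m. kernel_factor b m k s) = 0"
    by (intro sum.neutral) (auto simp: kernel_factor_def)
  with False show ?thesis
    by simp
qed (simp add: sum_kernel_factor a b \<open>k \<le> n\<close>)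

lemma sum_kernel_nat_mult_Phi0:
  assumes a: "\<And>t. a * q * q ^ t \<noteq> 1" and b: "\<And>t. b * q * q ^ t \<noteq> 1"
    and c: "\<And>t. a * b * q * q ^ t \<noteq> 1"
  shows "(\<Sum>r\<le>n. \<Sum>s\<le>m. kernel_nat n m r s a b q * Phi0 r s a b q) = Phi0 n m a b q"
proof -
  define Z where "Z k = q ^ (k * k) / (qpochhammer q q k * qpochhammer (a * b * q) q k)" for k
  have "(\<Sum>r\<le>n. \<Sum>s\<le>m. kernel_nat n m r s a b q * Phi0 r s a b q)
      = (\<Sum>r\<le>n. \<Sum>s\<le>m. \<Sum>k\<le>n. kernel_factor a n k r * kernel_factor b m k s * Z k)"
    unfolding Z_def by (intro sum.cong refl kernel_nat_mult_Phi0_expansion [OF a b c]) simp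
  also have "\<dots> = (\<Sum>r\<le>n. \<Sum>k\<le>n. \<Sum>s\<le>m. kernel_factor a n k r * kernel_factor b m k s * Z k)"
    by (rule sum.cong [OF refl], rule sum.swap)
  also have "\<dots> = (\<Sum>k\<le>n. \<Sum>r\<le>n. \<Sum>s\<le>m. kernel_factor a n k r * kernel_factor b m k s * Z k)"
    by (rule sum.swap)
  also have "\<dots> = (\<Sum>k\<le>n. Z k * (\<Sum>r\<le>n. kernel_factor a n k r) * (\<Sum>s\<le>m. kernel_factor b m k s))"
    by (simp add: sum_product sum_distrib_left ac_simps)
  also have "\<dots> = (\<Sum>k\<le>n. 1 / (qpochhammer (a * q) q n * qpochhammer (b * q) q m)
      * (if k \<le> m then (a * b) ^ k * q ^ (k * k) / (qpochhammer q q k * qpochhammer (a * b * q) q k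
          * qpochhammer q q (n - k) * qpochhammer q q (m - k)) else 0))"
    by (intro sum.cong refl, simp only: mult.assoc atMost_iff sum_kernel_factor_mult_sum_kernel_factor [OF a b])
      (simp add: Z_def power_mult_distrib divide_inverse inverse_mult_distrib ac_simps)
  also have "\<dots> = 1 / (qpochhammer (a * q) q n * qpochhammer (b * q) q m)
      * (qpochhammer (a * b * q) q (n + m) / (qpochhammer q q n * qpochhammer q q m
          * qpochhammer (a * b * q) q n * qpochhammer (a * b * q) q m))"
    by (simp only: qpochhammer_add_expansion_square [OF c] sum_distrib_left)
  also have "\<dots> = Phi0 n m a b q"
    by (simp add: Phi0_def divide_inverse inverse_mult_distrib ac_simps)
  finally show ?thesis .
qed

end

section \<open>Reduction to \<open>y = 0\<close>\<close>

lemma qpoch_of_nat: "qpoch x q (int k) = qpochhammer x q k"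
  by (simp add: qpoch_def qpochhammer_def)

lemma qpoch_uminus: "qpoch x q (- int j) = 1 / (\<Prod>l\<in>{1..j}. 1 - x / q ^ l)"
  by (cases "j = 0") (simp_all add: qpoch_def)

lemma qpoch_q_q_neg:
  assumes "q \<noteq> 0" and "d < 0"
  shows "qpoch q q d = 0"
proof -
  obtain j where j: "d = - int (Suc j)"
    using \<open>d < 0\<close> negD by blast
  have "(\<Prod>l\<in>{1..Suc j}. 1 - q / q ^ l) = 0"
    by (rule prod_zero) (use \<open>q \<noteq> 0\<close> in \<open>auto intro!: bexI [of _ 1]\<close>)
  then show ?thesis
    unfolding j qpoch_uminus by simp
qed

lemma qpoch_plus_1:
  assumes "x * q powi e \<noteq> 1"
  shows "qpoch x q (e + 1) = qpoch x q e * (1 - x * q powi e)"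
proof (cases "e \<ge> 0")
  case True
  then obtain j where j: "e = int j"
    by (metis nonneg_eq_int)
  have "int j + 1 = int (Suc j)"
    by simp
  then show ?thesis
    unfolding j by (simp only: qpoch_of_nat) (simp add: qpochhammer_Suc)
next
  case False
  then obtain j where j: "e = - int (Suc j)"
    using negD [of e] by force
  define P where "P = (\<Prod>l\<in>{1..j}. 1 - x / q ^ l)"
  define f where "f = 1 - x / q ^ Suc j"
  have C: "1 - x * q powi e = f"
    unfolding j f_def power_int_minus power_int_of_nat by (simp add: divide_inverse)
  have A: "qpoch x q e = 1 / (P * f)"
    unfolding j qpoch_uminus P_def f_def by (simp add: prod.cl_ivl_Suc)
  have B: "qpoch x q (e + 1) = 1 / P"
    using j by (simp add: qpoch_uminus P_def)
  have "f \<noteq> 0"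
    using assms C by auto
  then show ?thesis
    unfolding A B C by (cases "P = 0") (simp_all add: field_simps)
qed

lemma qpoch_add_of_nat:
  assumes "q \<noteq> 0" and x: "\<And>e. x * q powi e \<noteq> 1"
  shows "qpoch x q (d + int k) = qpoch x q d * qpochhammer (x * q powi d) q k"
proof (induction k)
  case (Suc k)
  have "d + int (Suc k) = (d + int k) + 1"
    by simp
  then have "qpoch x q (d + int (Suc k)) = qpoch x q (d + int k) * (1 - x * q powi (d + int k))"
    by (simp only: qpoch_plus_1 [OF x])
  also have "x * q powi (d + int k) = x * q powi d * q ^ k"
    using \<open>q \<noteq> 0\<close> by (simp add: power_int_add)
  finally show ?case
    using Suc.IH by (simp add: qpochhammer_Suc)
qed simp

lemma power_int_shift_mult:
  fixes q :: "'a::field"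
  assumes "q \<noteq> 0"
  shows "q powi (2 * int i - int j) * q powi (2 * int j - int i) = q powi int (i + j)"
  using assms by (simp add: power_int_add [symmetric] add.commute)

lemma Kker_shift:
  fixes i j n' m' r' s' :: nat
  assumes "q \<noteq> 0" and "r' \<le> n'" and "s' \<le> m'"
  shows "Kker (int (i + n')) (int (j + m')) (int (i + r')) (int (j + s')) z w q
    = z ^ i * w ^ j * q ^ (i * i + j * j - i * j)
      * kernel_nat n' m' r' s' (z * q powi (2 * int i - int j)) (w * q powi (2 * int j - int i)) q"
proof -
  have "int (i + n') - int (i + r') = int (n' - r')" "int (j + m') - int (j + s') = int (m' - s')"
    using assms by simp_all
  then have denominator: "qpoch q q (int (i + n') - int (i + r'))
      * qpoch q q (int (j + m') - int (j + s')) = qpochhammer q q (n' - r') * qpochhammer q q (m' - s')"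
    by (simp only: qpoch_of_nat)
  have "int (i + r') ^ 2 - int (i + r') * int (j + s') + int (j + s') ^ 2
     = int (i * i + j * j - i * j) + (2 * int i - int j) * int r' + (2 * int j - int i) * int s'
       + int (r' * r' + s' * s' - r' * s')"
    using mult_le_sq_add_sq [of i j] mult_le_sq_add_sq [of r' s']
    by (simp add: of_nat_diff power2_eq_square algebra_simps)
  then have "q powi (int (i + r') ^ 2 - int (i + r') * int (j + s') + int (j + s') ^ 2)
     = q ^ (i * i + j * j - i * j) * (q powi (2 * int i - int j)) ^ r'
       * (q powi (2 * int j - int i)) ^ s' * q ^ (r' * r' + s' * s' - r' * s')"
    using \<open>q \<noteq> 0\<close> by (simp add: power_int_add power_int_mult)
  moreover have "z powi int (i + r') = z ^ i * z ^ r'" "w powi int (j + s') = w ^ j * w ^ s'"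
    by (simp_all only: power_int_of_nat power_add)
  ultimately show ?thesis
    unfolding Kker_def kernel_nat_def denominator by (simp add: power_mult_distrib ac_simps)
qed

lemma Phiy_shift:
  fixes i j r' s' :: nat
  assumes "q \<noteq> 0"
    and z: "\<And>k::int. z * q * q powi k \<noteq> 1" and w: "\<And>k::int. w * q * q powi k \<noteq> 1"
    and zw: "\<And>k::int. z * w * q * q powi k \<noteq> 1"
  shows "Phiy (int (i + r')) (int (j + s')) (int i) (int j - int i) (- int j) z w q
    = Phiy (int i) (int j) (int i) (int j - int i) (- int j) z w q
      * Phi0 r' s' (z * q powi (2 * int i - int j)) (w * q powi (2 * int j - int i)) q"
proof -
  define A B where "A = z * q powi (2 * int i - int j)" and "B = w * q powi (2 * int j - int i)"
  have AB: "z * w * q * q powi int (i + j) = A * B * q"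
    using power_int_shift_mult [OF \<open>q \<noteq> 0\<close>, of i j] by (simp add: A_def B_def ac_simps)
  have zw_shift: "qpoch (z * w * q) q (int (i + j) + int k)
      = qpoch (z * w * q) q (int (i + j)) * qpochhammer (A * B * q) q k" for k
    unfolding AB [symmetric] by (rule qpoch_add_of_nat [OF \<open>q \<noteq> 0\<close> zw])
  have z_shift: "qpoch (z * q) q ((2 * int i - int j) + int r')
      = qpoch (z * q) q (2 * int i - int j) * qpochhammer (A * q) q r'"
    unfolding qpoch_add_of_nat [OF \<open>q \<noteq> 0\<close> z] A_def by (simp only: mult_ac)
  have w_shift: "qpoch (w * q) q ((2 * int j - int i) + int s')
      = qpoch (w * q) q (2 * int j - int i) * qpochhammer (B * q) q s'"
    unfolding qpoch_add_of_nat [OF \<open>q \<noteq> 0\<close> w] B_def by (simp only: mult_ac)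
  have arguments: "int (i + r') + int (j + s') = int (i + j) + int (r' + s')"
    "int (i + r') - - int j = int (i + j) + int r'"
    "int (j + s') + int i = int (i + j) + int s'"
    "int (i + r') - (int j - int i) = (2 * int i - int j) + int r'"
    "int (j + s') + (int j - int i) = (2 * int j - int i) + int s'"
    "int (i + r') - int i = int r'" "int (j + s') + - int j = int s'"
    "int i + int j = int (i + j) + int 0" "int i - - int j = int (i + j) + int 0"
    "int j + int i = int (i + j) + int 0"
    "int i - (int j - int i) = (2 * int i - int j) + int 0"
    "int j + (int j - int i) = (2 * int j - int i) + int 0"
    "int i - int i = int 0" "int j + - int j = int 0"
    by simp_all
  show ?thesis
    unfolding Phiy_def Phi0_def arguments zw_shift z_shift w_shift qpoch_of_nat
      A_def [symmetric] B_def [symmetric]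
    by (simp add: divide_inverse inverse_mult_distrib ac_simps)
qed

lemma Phiy_eq_0_left: "q \<noteq> 0 \<Longrightarrow> r < int i \<Longrightarrow> Phiy r s (int i) y2 y3 z w q = 0"
  unfolding Phiy_def using qpoch_q_q_neg [of q "r - int i"] by simp

lemma Phiy_eq_0_right: "q \<noteq> 0 \<Longrightarrow> s < int j \<Longrightarrow> Phiy r s y1 y2 (- int j) z w q = 0"
  unfolding Phiy_def using qpoch_q_q_neg [of q "s + - int j"] by simp

lemma sum_atLeastAtMost_int: "(\<Sum>r = 0..int n. f r) = (\<Sum>r\<le>n. f (int r))"
  by (rule sum.reindex_bij_witness [of _ int nat]) auto

lemma shifted_parameters_not_1:
  fixes i j :: nat and q z w :: "'a::field"
  assumes "q \<noteq> 0"
    and z: "\<And>k::int. z * q * q powi k \<noteq> 1" and w: "\<And>k::int. w * q * q powi k \<noteq> 1"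
    and zw: "\<And>k::int. z * w * q * q powi k \<noteq> 1"
  defines "A \<equiv> z * q powi (2 * int i - int j)" and "B \<equiv> w * q powi (2 * int j - int i)"
  shows "A * q * q ^ t \<noteq> 1" and "B * q * q ^ t \<noteq> 1" and "A * B * q * q ^ t \<noteq> 1"
proof -
  have "A * q * q ^ t = z * q * q powi (2 * int i - int j + int t)"
    "B * q * q ^ t = w * q * q powi (2 * int j - int i + int t)"
    "A * B * q * q ^ t = z * w * q * q powi (int (i + j) + int t)"
    using \<open>q \<noteq> 0\<close> power_int_shift_mult [OF \<open>q \<noteq> 0\<close>, of i j]
    by (simp_all add: A_def B_def power_int_add ac_simps)
  then show "A * q * q ^ t \<noteq> 1" "B * q * q ^ t \<noteq> 1" "A * B * q * q ^ t \<noteq> 1"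
    using z w zw by metis+
qed

lemma sum_Kker_mult_Phiy_add:
  fixes i j n' m' :: nat
  assumes "q_not_root_of_unity q"
    and z: "\<And>k::int. z * q * q powi k \<noteq> 1" and w: "\<And>k::int. w * q * q powi k \<noteq> 1"
    and zw: "\<And>k::int. z * w * q * q powi k \<noteq> 1"
  shows "(\<Sum>r\<le>i + n'. \<Sum>s\<le>j + m'. Kker (int (i + n')) (int (j + m')) (int r) (int s) z w q
           * Phiy (int r) (int s) (int i) (int j - int i) (- int j) z w q)
    = z ^ i * w ^ j * q ^ (i * i + j * j - i * j)
      * Phiy (int (i + n')) (int (j + m')) (int i) (int j - int i) (- int j) z w q"
proof -
  interpret q_not_root_of_unity q by fact
  define A B where "A = z * q powi (2 * int i - int j)" and "B = w * q powi (2 * int j - int i)"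
  define F where "F r s = Kker (int (i + n')) (int (j + m')) (int r) (int s) z w q
    * Phiy (int r) (int s) (int i) (int j - int i) (- int j) z w q" for r s
  have "(\<Sum>r\<le>i + n'. \<Sum>s\<le>j + m'. F r s) = (\<Sum>r\<le>n'. \<Sum>s\<le>m'. F (i + r) (j + s))"
    unfolding F_def
    by (subst sum_atMost_add_vanishing, simp add: Phiy_eq_0_left q_nonzero)
      (intro sum.cong refl sum_atMost_add_vanishing, simp add: Phiy_eq_0_right q_nonzero)
  also have "\<dots> = (\<Sum>r\<le>n'. \<Sum>s\<le>m'. z ^ i * w ^ j * q ^ (i * i + j * j - i * j)
      * Phiy (int i) (int j) (int i) (int j - int i) (- int j) z w q
      * (kernel_nat n' m' r s A B q * Phi0 r s A B q))"
  proof (intro sum.cong refl)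
    fix r s
    assume "r \<in> {..n'}" "s \<in> {..m'}"
    then show "F (i + r) (j + s) = z ^ i * w ^ j * q ^ (i * i + j * j - i * j)
        * Phiy (int i) (int j) (int i) (int j - int i) (- int j) z w q
        * (kernel_nat n' m' r s A B q * Phi0 r s A B q)"
      unfolding F_def A_def B_def
      by (simp only: Kker_shift [OF q_nonzero] Phiy_shift [OF q_nonzero z w zw] atMost_iff mult_ac)
  qed
  also have "\<dots> = z ^ i * w ^ j * q ^ (i * i + j * j - i * j)
      * Phiy (int i) (int j) (int i) (int j - int i) (- int j) z w q
      * (\<Sum>r\<le>n'. \<Sum>s\<le>m'. kernel_nat n' m' r s A B q * Phi0 r s A B q)"
    by (simp only: sum_distrib_left)
  also have "\<dots> = z ^ i * w ^ j * q ^ (i * i + j * j - i * j)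
      * Phiy (int (i + n')) (int (j + m')) (int i) (int j - int i) (- int j) z w q"
    unfolding sum_kernel_nat_mult_Phi0 [OF shifted_parameters_not_1 [OF q_nonzero z w zw]] A_def B_def
    by (simp only: Phiy_shift [OF q_nonzero z w zw] mult_ac)
  finally show ?thesis
    by (simp only: F_def)
qed

lemma sum_Kker_mult_Phiy:
  fixes i j n m :: nat
  assumes q: "q_not_root_of_unity q"
    and z: "\<And>k::int. z * q * q powi k \<noteq> 1" and w: "\<And>k::int. w * q * q powi k \<noteq> 1"
    and zw: "\<And>k::int. z * w * q * q powi k \<noteq> 1"
  shows "(\<Sum>r = 0..int n. \<Sum>s = 0..int m.
           Kker (int n) (int m) r s z w q * Phiy r s (int i) (int j - int i) (- int j) z w q)
    = z ^ i * w ^ j * q ^ (i * i + j * j - i * j)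
      * Phiy (int n) (int m) (int i) (int j - int i) (- int j) z w q"
proof (cases "i \<le> n \<and> j \<le> m")
  case True
  then obtain n' m' where "n = i + n'" and "m = j + m'"
    using le_Suc_ex by blast
  then show ?thesis
    using sum_Kker_mult_Phiy_add [OF q z w zw] by (simp only: sum_atLeastAtMost_int)
next
  case False
  have "q \<noteq> 0"
    using q by (rule q_not_root_of_unity.q_nonzero)
  with False show ?thesis
    by (auto simp: sum_atLeastAtMost_int Phiy_eq_0_left Phiy_eq_0_right intro!: sum.neutral)
qed

section \<open>Summing over the permutations\<close>

lemma permutes_minus_rho:
  fixes \<sigma> :: "nat \<Rightarrow> nat"
  assumes \<sigma>: "\<sigma> permutes {1, 2, 3}"
  defines "i \<equiv> \<sigma> 1 - 1" and "j \<equiv> 3 - \<sigma> 3"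
  shows "int (\<sigma> 1) - 1 = int i" and "int (\<sigma> 2) - 2 = int j - int i" and "int (\<sigma> 3) - 3 = - int j"
    and "i * i + j * j - i * j = i + j"
proof -
  have range: "\<sigma> 1 \<in> {1, 2, 3}" "\<sigma> 3 \<in> {1, 2, 3}"
    using permutes_in_image [OF \<sigma>] by auto
  have "\<sigma> 1 \<noteq> \<sigma> 3"
    using permutes_inj [OF \<sigma>] by (simp add: inj_eq)
  have "\<sigma> 1 + \<sigma> 2 + \<sigma> 3 = 6"
    using sum.permute [OF \<sigma>, of id] by simp
  have "1 \<le> \<sigma> 1" "\<sigma> 3 \<le> 3"
    using range by auto
  then show y1: "int (\<sigma> 1) - 1 = int i" and y3: "int (\<sigma> 3) - 3 = - int j"
    by (simp_all add: i_def j_def of_nat_diff)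
  show "int (\<sigma> 2) - 2 = int j - int i"
    using y1 y3 \<open>\<sigma> 1 + \<sigma> 2 + \<sigma> 3 = 6\<close> by linarith
  have "i \<in> {0, 1, 2}" "j \<in> {0, 1, 2}" "i + j \<noteq> 2"
    using range \<open>\<sigma> 1 \<noteq> \<sigma> 3\<close> by (auto simp: i_def j_def)
  then show "i * i + j * j - i * j = i + j"
    by auto
qed

lemma sum_Kker_mult_Phiy_permutation:
  fixes \<sigma> :: "nat \<Rightarrow> nat"
  assumes q: "q_not_root_of_unity q" and \<sigma>: "\<sigma> permutes {1, 2, 3}"
    and z: "\<And>k::int. z * q powi k \<noteq> 1" and w: "\<And>k::int. w * q powi k \<noteq> 1"
    and zw: "\<And>k::int. z * w * q powi k \<noteq> 1"
  shows "(\<Sum>r = 0..int n. \<Sum>s = 0..int m. Kker (int n) (int m) r s (z / q) (w / q) q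
           * Phiy r s (int (\<sigma> 1) - 1) (int (\<sigma> 2) - 2) (int (\<sigma> 3) - 3) (z / q) (w / q) q)
    = z ^ (\<sigma> 1 - 1) * w ^ (3 - \<sigma> 3)
      * Phiy (int n) (int m) (int (\<sigma> 1) - 1) (int (\<sigma> 2) - 2) (int (\<sigma> 3) - 3) (z / q) (w / q) q"
proof -
  have "q \<noteq> 0"
    using q by (rule q_not_root_of_unity.q_nonzero)
  have zq: "z / q * q * q powi k \<noteq> 1" and wq: "w / q * q * q powi k \<noteq> 1" for k
    using z [of k] w [of k] \<open>q \<noteq> 0\<close> by simp_all
  have zwq: "z / q * (w / q) * q * q powi k \<noteq> 1" for k
  proof -
    have "z / q * (w / q) * q * q powi k = z * w * q powi (k - 1)"
      using \<open>q \<noteq> 0\<close> by (simp add: power_int_diff)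
    then show ?thesis
      using zw [of "k - 1"] by simp
  qed
  have factor: "(z / q) ^ (\<sigma> 1 - 1) * (w / q) ^ (3 - \<sigma> 3) * q ^ ((\<sigma> 1 - 1) + (3 - \<sigma> 3))
      = z ^ (\<sigma> 1 - 1) * w ^ (3 - \<sigma> 3)"
    using \<open>q \<noteq> 0\<close> by (simp add: power_add power_divide)
  show ?thesis
    by (simp only: permutes_minus_rho [OF \<sigma>] sum_Kker_mult_Phiy [OF q zq wq zwq] factor)
qed

lemma sum_sum_mult_linear_combination:
  fixes K :: "'r \<Rightarrow> 's \<Rightarrow> 'a::comm_semiring_0"
  shows "(\<Sum>r\<in>R. \<Sum>s\<in>T. K r s * (\<Sum>\<sigma>\<in>S. c \<sigma> * Y \<sigma> r s))
     = (\<Sum>\<sigma>\<in>S. c \<sigma> * (\<Sum>r\<in>R. \<Sum>s\<in>T. K r s * Y \<sigma> r s))"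
proof -
  have "(\<Sum>r\<in>R. \<Sum>s\<in>T. K r s * (\<Sum>\<sigma>\<in>S. c \<sigma> * Y \<sigma> r s))
      = (\<Sum>r\<in>R. \<Sum>s\<in>T. \<Sum>\<sigma>\<in>S. K r s * (c \<sigma> * Y \<sigma> r s))"
    by (simp only: sum_distrib_left)
  also have "\<dots> = (\<Sum>r\<in>R. \<Sum>\<sigma>\<in>S. \<Sum>s\<in>T. K r s * (c \<sigma> * Y \<sigma> r s))"
    by (rule sum.cong [OF refl], rule sum.swap)
  also have "\<dots> = (\<Sum>\<sigma>\<in>S. \<Sum>r\<in>R. \<Sum>s\<in>T. K r s * (c \<sigma> * Y \<sigma> r s))"
    by (rule sum.swap)
  finally show ?thesis
    by (simp add: sum_distrib_left ac_simps)
qed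

theorem theorem4p9:
  fixes n m :: nat and u v c d z w q :: complex
  assumes "q \<noteq> 0" and "\<forall>k::nat. k \<ge> 1 \<longrightarrow> q ^ k \<noteq> 1"
    and "z \<noteq> 0" and "w \<noteq> 0" and "u \<noteq> 0" and "d \<noteq> 0"
    and "\<forall>k::int. z * q powi k \<noteq> 1"
    and "\<forall>k::int. w * q powi k \<noteq> 1"
    and "\<forall>k::int. z * w * q powi k \<noteq> 1"
  shows "(\<Sum>r=0..int n. \<Sum>s=0..int m.
            Kker (int n) (int m) r s (z/q) (w/q) q * PhiS r s u v c d z w q)
         = PhiS (int n) (int m) (u*z) (v*w) (c*z) (d*w) z w q"
proof -
  have q: "q_not_root_of_unity q"
    using assms(1,2) by unfold_locales auto
  define coeff where "coeff \<sigma> = of_int (sign \<sigma>) * (u * z) ^ (\<sigma> 1 - 1) * (if \<sigma> 3 = 1 then v / d else 1)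
    * (if \<sigma> 1 = 3 then c / u else 1) * (d * w) ^ (3 - \<sigma> 3)" for \<sigma> :: "nat \<Rightarrow> nat"
  define Y where "Y \<sigma> r s = Phiy r s (int (\<sigma> 1) - 1) (int (\<sigma> 2) - 2) (int (\<sigma> 3) - 3) (z / q) (w / q) q"
    for \<sigma> :: "nat \<Rightarrow> nat" and r s
  have PhiS_eq: "PhiS r s u v c d z w q = (\<Sum>\<sigma> | \<sigma> permutes {1, 2, 3}. coeff \<sigma> * Y \<sigma> r s)"
    for r s
    unfolding PhiS_def coeff_def Y_def ..
  have PhiS_shifted_eq: "PhiS (int n) (int m) (u * z) (v * w) (c * z) (d * w) z w q
      = (\<Sum>\<sigma> | \<sigma> permutes {1, 2, 3}. coeff \<sigma> * (z ^ (\<sigma> 1 - 1) * w ^ (3 - \<sigma> 3) * Y \<sigma> (int n) (int m)))"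
    using assms(3,4) unfolding PhiS_def coeff_def Y_def
    by (intro sum.cong refl) (simp add: power_mult_distrib ac_simps)
  show ?thesis
    unfolding PhiS_eq PhiS_shifted_eq sum_sum_mult_linear_combination Y_def
    using sum_Kker_mult_Phiy_permutation [OF q _ assms(7-9) [rule_format]]
    by (intro sum.cong refl) simp
qed

end
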